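(* Assume (A7) and (A8) of the context. Then for every $\delta\in\mathbb{R}^D$ with $\|\delta\|\le\|\theta^*\|$, with probability $1-\delta_{n_q}$, $\|\nabla^2_\theta\ell(\theta^*+\delta)\|\le 2C_{\mathrm{ratio}}D_{\max,2}$.
   Context: Let $E=\{(u,v):1\le v\le u\le m\}$, $D=b|E|$, $\psi:\mathbb{R}^2\to\mathbb{R}^b$, and $f:\mathbb{R}^m\to\mathbb{R}^D$ the concatenation of the blocks $f_t(x)=\psi(x_u,x_v)$, $t=(u,v)\in E$; $f_S$ is the subvector of blocks in $S\subseteq E$. $P,Q$ are distributions on $\mathbb{R}^m$ with densities $p,q$; samples $x_p^{(1..n_p)}$ i.i.d. $P$ and $x_q^{(1..n_q)}$ i.i.d. $Q$. $r(x;\theta)=\exp(\theta^\top f(x))/N(\theta)$, $N(\theta)=\mathbb{E}_Q[\exp(\theta^\top f(x))]$; $\hat N(\theta)=\frac1{n_q}\sum_i\exp(\theta^\top f(x_q^{(i)}))$; $\hat r(x;\theta)=\exp(\theta^\top f(x))/\hat N(\theta)$; $\ell(\theta)=-\frac1{n_p}\sum_i\theta^\top f(x_p^{(i)})+\log\hat N(\theta)$. $\theta^*$ is the true parameter ($p=q\,r(\cdot;\theta^* )$), $S=\{t:\theta^*_t\neq0\}$. $\|\cdot\|$: Euclidean norm on vectors, spectral norm on matrices; $\Lambda_{\min}$ smallest eigenvalue. (A7) For all $\delta$ with $\|\delta\|\le\|\theta^*\|$ and all $x$: $0<C_{\min}\le r(x;\theta^*+\delta)\le C_{\max}<\infty$;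 moreover $\frac1{C_{\mathrm{ratio}}}\le\hat r(x;\theta^*+\delta)\le C_{\mathrm{ratio}}$ and $\|f_t(x)\|\le C_{f_t,\max}$ for constants. (A8) With probability 1: $\max_{t\in E}\frac1{n_q}\sum_i\|f_t(x_q^{(i)})\|\le D_{\max,1}<\infty$, $\|\frac1{n_q}\sum_if(x_q^{(i)})f(x_q^{(i)})^\top\|\le D_{\max,2}$ and $\|\widehat{\mathrm{Cov}}_q[f]\|\le D_{\max,2}<\infty$; with probability $1-\delta_{n_q}$, $\Lambda_{\min}(\widehat{\mathrm{Cov}}_q[f_S])\ge D_{\min,2}>0$; $\widehat{\mathrm{Cov}}_q$ is the sample covariance over the $Q$-sample. *)

theory Defs
  imports "HOL-Probability.Probability"
begin

definition Eset :: "('m::linorder \<times> 'm) set" where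
  "Eset = {(u, v). v \<le> u}"

definition fblock :: "(real \<Rightarrow> real \<Rightarrow> real^'b) \<Rightarrow> ('m \<times> 'm) \<Rightarrow> real^'m \<Rightarrow> real^'b" where
  "fblock psi t x = psi (x $ fst t) (x $ snd t)"

text \<open>Concatenated feature map f : R^m \<rightarrow> R^D; coordinate d of R^D is the
  coordinate snd (idx d) of the block fst (idx d) (idx is a bijection onto E \<times> 'b).\<close>
definition feat :: "(real \<Rightarrow> real \<Rightarrow> real^'b) \<Rightarrow> ('d \<Rightarrow> ('m \<times> 'm) \<times> 'b) \<Rightarrow> real^'m \<Rightarrow> real^'d" where
  "feat psi idx x = (\<chi> d. fblock psi (fst (idx d)) x $ snd (idx d))"

definition Npop :: "('x measure) \<Rightarrow> ('x \<Rightarrow> real^'d) \<Rightarrow> real^'d \<Rightarrow> real" where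
  "Npop Q f th = integral\<^sup>L Q (\<lambda>x. exp (th \<bullet> f x))"

definition rpop :: "('x measure) \<Rightarrow> ('x \<Rightarrow> real^'d) \<Rightarrow> real^'d \<Rightarrow> 'x \<Rightarrow> real" where
  "rpop Q f th x = exp (th \<bullet> f x) / Npop Q f th"

definition Nhat :: "('x \<Rightarrow> real^'d) \<Rightarrow> (nat \<Rightarrow> 'x) \<Rightarrow> nat \<Rightarrow> real^'d \<Rightarrow> real" where
  "Nhat f xs n th = (\<Sum>i<n. exp (th \<bullet> f (xs i))) / real n"

definition rhat :: "('x \<Rightarrow> real^'d) \<Rightarrow> (nat \<Rightarrow> 'x) \<Rightarrow> nat \<Rightarrow> real^'d \<Rightarrow> 'x \<Rightarrow> real" where
  "rhat f xs n th x = exp (th \<bullet> f x) / Nhat f xs n th"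

definition ell :: "('x \<Rightarrow> real^'d) \<Rightarrow> (nat \<Rightarrow> 'x) \<Rightarrow> nat \<Rightarrow> (nat \<Rightarrow> 'x) \<Rightarrow> nat \<Rightarrow> real^'d \<Rightarrow> real" where
  "ell f xp np xq nq th = - (\<Sum>i<np. th \<bullet> f (xp i)) / real np + ln (Nhat f xq nq th)"

definition partial_deriv :: "(real^'d \<Rightarrow> real) \<Rightarrow> 'd \<Rightarrow> real^'d \<Rightarrow> real" where
  "partial_deriv g i th = deriv (\<lambda>t. g (th + t *\<^sub>R axis i 1)) 0"

definition hessian :: "(real^'d \<Rightarrow> real) \<Rightarrow> real^'d \<Rightarrow> real^'d^'d" where
  "hessian g th = (\<chi> i j. partial_deriv (\<lambda>eta. partial_deriv g j eta) i th)"

definition specnorm :: "real^'n^'n \<Rightarrow> real" where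
  "specnorm A = onorm (\<lambda>x. A *v x)"

definition outer :: "real^'n \<Rightarrow> real^'n \<Rightarrow> real^'n^'n" where
  "outer u v = (\<chi> i j. u $ i * v $ j)"

definition smean :: "('x \<Rightarrow> real^'d) \<Rightarrow> (nat \<Rightarrow> 'x) \<Rightarrow> nat \<Rightarrow> real^'d" where
  "smean f xs n = (1 / real n) *\<^sub>R (\<Sum>k<n. f (xs k))"

definition smom :: "('x \<Rightarrow> real^'d) \<Rightarrow> (nat \<Rightarrow> 'x) \<Rightarrow> nat \<Rightarrow> real^'d^'d" where
  "smom f xs n = (1 / real n) *\<^sub>R (\<Sum>k<n. outer (f (xs k)) (f (xs k)))"

definition scov :: "('x \<Rightarrow> real^'d) \<Rightarrow> (nat \<Rightarrow> 'x) \<Rightarrow> nat \<Rightarrow> real^'d^'d" where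
  "scov f xs n = (1 / real n) *\<^sub>R
     (\<Sum>k<n. outer (f (xs k) - smean f xs n) (f (xs k) - smean f xs n))"

definition sub_eigenvalues :: "real^'n^'n \<Rightarrow> 'n set \<Rightarrow> real set" where
  "sub_eigenvalues A J = {c. \<exists>v. v \<noteq> 0 \<and> (\<forall>i. i \<notin> J \<longrightarrow> v $ i = 0) \<and>
                               (\<forall>i\<in>J. (A *v v) $ i = c * v $ i)}"

definition lambda_min_sub :: "real^'n^'n \<Rightarrow> 'n set \<Rightarrow> real" where
  "lambda_min_sub A J = Inf (sub_eigenvalues A J)"

end

theory Submission
  imports Defs
begin

text \<open>The Hessian of the empirical objective is the covariance matrix of the features
  under the Gibbs weights w_k = exp (\<theta> \<bullet> f(x_k)) / \<Sum>_j exp (\<theta> \<bullet> f(x_j)), and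
  w_k = r_hat(x_k) / n_q \<le> C_ratio / n_q. Hence the weighted second moment is dominated by
  C_ratio times the empirical second moment, whose norm is at most D_max,2; the outer
  product of the weighted mean obeys the same bound by Cauchy-Schwarz, and the triangle
  inequality gives the factor 2.\<close>

definition gibbs_weights :: "(nat \<Rightarrow> real^'d) \<Rightarrow> nat \<Rightarrow> real^'d \<Rightarrow> nat \<Rightarrow> real" where
  "gibbs_weights ys n th k = exp (th \<bullet> ys k) / (\<Sum>j<n. exp (th \<bullet> ys j))"

definition weighted_moment :: "(nat \<Rightarrow> real) \<Rightarrow> (nat \<Rightarrow> real^'d) \<Rightarrow> nat \<Rightarrow> real^'d^'d" where
  "weighted_moment w ys n = (\<Sum>k<n. w k *\<^sub>R outer (ys k) (ys k))"

definition weighted_mean :: "(nat \<Rightarrow> real) \<Rightarrow> (nat \<Rightarrow> real^'d) \<Rightarrow> nat \<Rightarrow> real^'d" where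
  "weighted_mean w ys n = (\<Sum>k<n. w k *\<^sub>R ys k)"

definition weighted_cov :: "(nat \<Rightarrow> real) \<Rightarrow> (nat \<Rightarrow> real^'d) \<Rightarrow> nat \<Rightarrow> real^'d^'d" where
  "weighted_cov w ys n = weighted_moment w ys n - outer (weighted_mean w ys n) (weighted_mean w ys n)"

lemma gibbs_weights_pos: "0 < n \<Longrightarrow> 0 < gibbs_weights ys n th k"
  unfolding gibbs_weights_def by (intro divide_pos_pos sum_pos) auto

lemma sum_gibbs_weights:
  assumes "0 < n"
  shows "(\<Sum>k<n. gibbs_weights ys n th k) = 1"
proof -
  from assms have "0 < (\<Sum>j<n. exp (th \<bullet> ys j))" by (intro sum_pos) auto
  then show ?thesis unfolding gibbs_weights_def by (simp add: sum_divide_distrib[symmetric])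
qed

lemma rhat_eq_gibbs_weights:
  "rhat f xs n th (xs k) = real n * gibbs_weights (\<lambda>k. f (xs k)) n th k"
  by (simp add: rhat_def Nhat_def gibbs_weights_def)

lemma inner_add_scaleR_axis: "(th + t *\<^sub>R axis j 1) \<bullet> y = th \<bullet> y + t * y $ j"
  by (simp add: inner_add_left inner_axis')

lemma partial_deriv_ell:
  assumes "0 < nq"
  shows "partial_deriv (ell f xp np xq nq) j th =
     - (\<Sum>i<np. f (xp i) $ j) / real np
     + (\<Sum>k<nq. exp (th \<bullet> f (xq k)) * f (xq k) $ j) / (\<Sum>k<nq. exp (th \<bullet> f (xq k)))"
proof -
  let ?Z = "\<lambda>t. \<Sum>k<nq. exp (th \<bullet> f (xq k) + t * f (xq k) $ j)"
  have ell_line: "(\<lambda>t. ell f xp np xq nq (th + t *\<^sub>R axis j 1)) =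
    (\<lambda>t. (- 1 / real np) * (\<Sum>i<np. th \<bullet> f (xp i) + t * f (xp i) $ j) + ln (?Z t / real nq))"
    by (simp add: ell_def Nhat_def inner_add_scaleR_axis)
  have "0 < ?Z 0" using assms by (intro sum_pos) auto
  then have "((\<lambda>t. (- 1 / real np) * (\<Sum>i<np. th \<bullet> f (xp i) + t * f (xp i) $ j) + ln (?Z t / real nq))
     has_real_derivative
       - (\<Sum>i<np. f (xp i) $ j) / real np
       + (\<Sum>k<nq. exp (th \<bullet> f (xq k)) * f (xq k) $ j) / (\<Sum>k<nq. exp (th \<bullet> f (xq k)))) (at 0)"
    using assms by (cases "np = 0") (auto intro!: derivative_eq_intros)
  then show ?thesis unfolding partial_deriv_def ell_line by (rule DERIV_imp_deriv)
qed

lemma hessian_ell: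
  assumes "0 < nq"
  shows "hessian (ell f xp np xq nq) th =
           weighted_cov (gibbs_weights (\<lambda>k. f (xq k)) nq th) (\<lambda>k. f (xq k)) nq"
proof -
  define ys where "ys = (\<lambda>k. f (xq k))"
  let ?w = "gibbs_weights ys nq th"
  have "hessian (ell f xp np xq nq) th $ i $ j = weighted_cov ?w ys nq $ i $ j" for i j
  proof -
    let ?Z = "\<lambda>t. \<Sum>k<nq. exp (th \<bullet> ys k + t * ys k $ i)"
    let ?U = "\<lambda>t. \<Sum>k<nq. exp (th \<bullet> ys k + t * ys k $ i) * ys k $ j"
    have line: "(\<lambda>t. partial_deriv (ell f xp np xq nq) j (th + t *\<^sub>R axis i 1)) =
      (\<lambda>t. - (\<Sum>i<np. f (xp i) $ j) / real np + ?U t / ?Z t)"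
      by (simp add: partial_deriv_ell[OF assms] inner_add_scaleR_axis ys_def)
    have Z_pos: "0 < ?Z 0" using assms by (intro sum_pos) auto
    then have d: "((\<lambda>t. - (\<Sum>i<np. f (xp i) $ j) / real np + ?U t / ?Z t) has_real_derivative
       ((\<Sum>k<nq. exp (th \<bullet> ys k) * ys k $ i * ys k $ j) * ?Z 0
         - ?U 0 * (\<Sum>k<nq. exp (th \<bullet> ys k) * ys k $ i)) / (?Z 0 * ?Z 0)) (at 0)"
      by (auto intro!: derivative_eq_intros simp: power2_eq_square algebra_simps)
    have "hessian (ell f xp np xq nq) th $ i $ j =
       ((\<Sum>k<nq. exp (th \<bullet> ys k) * ys k $ i * ys k $ j) * ?Z 0
         - ?U 0 * (\<Sum>k<nq. exp (th \<bullet> ys k) * ys k $ i)) / (?Z 0 * ?Z 0)"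
      unfolding hessian_def partial_deriv_def[of "\<lambda>eta. partial_deriv _ j eta"]
      using DERIV_imp_deriv[OF d] line by (simp add: partial_deriv_def)
    also have "\<dots> = (\<Sum>k<nq. ?w k * ys k $ i * ys k $ j)
                     - (\<Sum>k<nq. ?w k * ys k $ i) * (\<Sum>k<nq. ?w k * ys k $ j)"
      using Z_pos unfolding gibbs_weights_def
      by (simp add: sum_divide_distrib[symmetric] field_simps)
    finally show ?thesis
      by (simp add: weighted_cov_def weighted_moment_def weighted_mean_def outer_def sum_component
          mult.assoc)
  qed
  then show ?thesis by (simp add: vec_eq_iff ys_def)
qed

lemma weighted_Cauchy_Schwarz_ineq_sum:
  fixes w :: "'a \<Rightarrow> real"
  assumes "\<And>k. k \<in> I \<Longrightarrow> 0 \<le> w k"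
  shows "(\<Sum>k\<in>I. w k * a k * b k)^2 \<le> (\<Sum>k\<in>I. w k * (a k)^2) * (\<Sum>k\<in>I. w k * (b k)^2)"
proof -
  have "(\<Sum>k\<in>I. (sqrt (w k) * a k) * (sqrt (w k) * b k))^2
     \<le> (\<Sum>k\<in>I. (sqrt (w k) * a k)^2) * (\<Sum>k\<in>I. (sqrt (w k) * b k)^2)"
    by (rule Cauchy_Schwarz_ineq_sum)
  also have "(\<Sum>k\<in>I. (sqrt (w k) * a k) * (sqrt (w k) * b k)) = (\<Sum>k\<in>I. w k * a k * b k)"
    using assms by (intro sum.cong) (auto simp: mult_ac real_sqrt_mult[symmetric])
  also have "(\<Sum>k\<in>I. (sqrt (w k) * a k)^2) = (\<Sum>k\<in>I. w k * (a k)^2)"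
    using assms by (intro sum.cong) (auto simp: power_mult_distrib)
  also have "(\<Sum>k\<in>I. (sqrt (w k) * b k)^2) = (\<Sum>k\<in>I. w k * (b k)^2)"
    using assms by (intro sum.cong) (auto simp: power_mult_distrib)
  finally show ?thesis .
qed

lemma outer_mult_vec: "outer u v *v x = (v \<bullet> x) *\<^sub>R u"
  by (simp add: vec_eq_iff outer_def matrix_vector_mult_def inner_vec_def sum_distrib_left mult_ac)

lemma weighted_moment_mult_vec:
  "weighted_moment w ys n *v x = (\<Sum>k<n. (w k * (ys k \<bullet> x)) *\<^sub>R ys k)"
  by (simp add: vec_eq_iff weighted_moment_def outer_def matrix_vector_mult_def inner_vec_def
      sum_component sum_distrib_left sum_distrib_right sum.swap[where A=UNIV] mult_ac)

lemma inner_weighted_moment_mult_vec: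
  "x \<bullet> (weighted_moment w ys n *v x) = (\<Sum>k<n. w k * (ys k \<bullet> x)^2)"
  by (simp add: weighted_moment_mult_vec inner_sum_right power2_eq_square inner_commute mult_ac)

lemma smom_eq_weighted_moment: "smom f xs n = weighted_moment (\<lambda>_. 1 / real n) (\<lambda>k. f (xs k)) n"
  by (simp add: smom_def weighted_moment_def scaleR_sum_right)

lemma norm_weighted_moment_mult_vec_le:
  fixes ys :: "nat \<Rightarrow> real^'d"
  assumes w_nonneg: "\<And>k. k < n \<Longrightarrow> 0 \<le> w k" and "0 \<le> c"
    and quad: "\<And>y. (\<Sum>k<n. w k * (ys k \<bullet> y)^2) \<le> c * (norm y)^2"
  shows "norm (weighted_moment w ys n *v x) \<le> c * norm x"
proof -
  define B where "B = weighted_moment w ys n *v x"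
  have "(norm B)^2 = (\<Sum>k<n. w k * (ys k \<bullet> x) * (ys k \<bullet> B))"
    by (simp add: power2_norm_eq_inner B_def weighted_moment_mult_vec inner_sum_left)
  then have "((norm B)^2)^2 \<le> (\<Sum>k<n. w k * (ys k \<bullet> x)^2) * (\<Sum>k<n. w k * (ys k \<bullet> B)^2)"
    using weighted_Cauchy_Schwarz_ineq_sum[of "{..<n}" w] w_nonneg by simp
  also have "\<dots> \<le> (c * (norm x)^2) * (c * (norm B)^2)"
    using w_nonneg \<open>0 \<le> c\<close> by (intro mult_mono quad) (auto intro: sum_nonneg)
  also have "\<dots> = (c * norm x * norm B)^2" by (simp add: power_mult_distrib power2_eq_square)
  finally have "(norm B)^2 \<le> c * norm x * norm B"
    by (rule power2_le_imp_le) (simp add: \<open>0 \<le> c\<close>)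
  then show ?thesis
    unfolding B_def[symmetric] by (cases "norm B = 0") (auto simp: \<open>0 \<le> c\<close> power2_eq_square)
qed

lemma norm_weighted_mean_outer_mult_vec_le:
  fixes ys :: "nat \<Rightarrow> real^'d"
  assumes w_nonneg: "\<And>k. k < n \<Longrightarrow> 0 \<le> w k" and w_sum: "(\<Sum>k<n. w k) = 1" and "0 \<le> c"
    and quad: "\<And>y. (\<Sum>k<n. w k * (ys k \<bullet> y)^2) \<le> c * (norm y)^2"
  shows "norm (outer (weighted_mean w ys n) (weighted_mean w ys n) *v x) \<le> c * norm x"
proof -
  define m where "m = weighted_mean w ys n"
  have "((norm m)^2)^2 = (\<Sum>k<n. w k * 1 * (ys k \<bullet> m))^2"
    by (simp add: m_def weighted_mean_def power2_norm_eq_inner inner_sum_left)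
  also have "\<dots> \<le> (\<Sum>k<n. w k * 1^2) * (\<Sum>k<n. w k * (ys k \<bullet> m)^2)"
    using weighted_Cauchy_Schwarz_ineq_sum[of "{..<n}" w "\<lambda>_. 1" "\<lambda>k. ys k \<bullet> m"] w_nonneg
    by simp
  also have "\<dots> \<le> c * (norm m)^2" using quad[of m] w_sum by simp
  finally have norm_m: "(norm m)^2 \<le> c"
    using \<open>0 \<le> c\<close> by (cases "norm m = 0") (auto simp: power2_eq_square)
  have "norm (outer m m *v x) = \<bar>m \<bullet> x\<bar> * norm m" by (simp add: outer_mult_vec)
  also have "\<dots> \<le> norm m * norm x * norm m" by (intro mult_right_mono Cauchy_Schwarz_ineq2) simp
  also have "\<dots> = (norm m)^2 * norm x" by (simp add: power2_eq_square)
  also have "\<dots> \<le> c * norm x" by (intro mult_right_mono norm_m) simp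
  finally show ?thesis unfolding m_def .
qed

lemma specnorm_weighted_cov_le:
  fixes ys :: "nat \<Rightarrow> real^'d"
  assumes "\<And>k. k < n \<Longrightarrow> 0 \<le> w k" and "(\<Sum>k<n. w k) = 1" and "0 \<le> c"
    and "\<And>y. (\<Sum>k<n. w k * (ys k \<bullet> y)^2) \<le> c * (norm y)^2"
  shows "specnorm (weighted_cov w ys n) \<le> 2 * c"
  unfolding specnorm_def
proof (rule onorm_le)
  fix x
  have "norm (weighted_cov w ys n *v x)
          \<le> norm (weighted_moment w ys n *v x)
            + norm (outer (weighted_mean w ys n) (weighted_mean w ys n) *v x)"
    unfolding weighted_cov_def matrix_vector_mult_diff_rdistrib by (rule norm_triangle_ineq4)
  also have "\<dots> \<le> c * norm x + c * norm x"
    by (intro add_mono norm_weighted_moment_mult_vec_le norm_weighted_mean_outer_mult_vec_le assms)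
  finally show "norm (weighted_cov w ys n *v x) \<le> 2 * c * norm x" by simp
qed

lemma weighted_quadratic_form_le:
  fixes ys :: "nat \<Rightarrow> real^'d"
  assumes w_le: "\<And>k. k < n \<Longrightarrow> w k \<le> C / real n" and "0 \<le> C"
    and moment_le: "specnorm (weighted_moment (\<lambda>_. 1 / real n) ys n) \<le> D"
  shows "(\<Sum>k<n. w k * (ys k \<bullet> x)^2) \<le> C * D * (norm x)^2"
proof -
  let ?M = "weighted_moment (\<lambda>_. 1 / real n) ys n"
  have "(\<Sum>k<n. w k * (ys k \<bullet> x)^2) \<le> (\<Sum>k<n. C * (1 / real n) * (ys k \<bullet> x)^2)"
    using w_le by (intro sum_mono mult_right_mono) auto
  also have "\<dots> = C * (x \<bullet> (?M *v x))"
    by (simp add: inner_weighted_moment_mult_vec sum_distrib_left mult.assoc)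
  also have "\<dots> \<le> C * (norm x * (D * norm x))"
  proof -
    have "norm (?M *v x) \<le> specnorm ?M * norm x"
      unfolding specnorm_def by (rule onorm) simp
    also have "\<dots> \<le> D * norm x" by (intro mult_right_mono moment_le) simp
    finally have "x \<bullet> (?M *v x) \<le> norm x * (D * norm x)"
      by (meson mult_left_mono norm_cauchy_schwarz norm_ge_zero order_trans)
    then show ?thesis using \<open>0 \<le> C\<close> by (rule mult_left_mono)
  qed
  also have "\<dots> = C * D * (norm x)^2" by (simp add: power2_eq_square)
  finally show ?thesis .
qed

lemma specnorm_nonneg: "0 \<le> specnorm A"
  unfolding specnorm_def by (rule onorm_pos_le) simp

lemma specnorm_hessian_ell_le:
  fixes f :: "'x \<Rightarrow> real^'d"
  assumes "0 < nq"
    and rhat_le: "\<And>k. k < nq \<Longrightarrow> rhat f xq nq th (xq k) \<le> C"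
    and smom_le: "specnorm (smom f xq nq) \<le> D"
  shows "specnorm (hessian (ell f xp np xq nq) th) \<le> 2 * C * D"
proof -
  define ys where "ys = (\<lambda>k. f (xq k))"
  define w where "w = gibbs_weights ys nq th"
  have w_pos: "0 < w k" for k
    unfolding w_def using \<open>0 < nq\<close> by (rule gibbs_weights_pos)
  have w_le: "w k \<le> C / real nq" if "k < nq" for k
    using rhat_le[OF that] \<open>0 < nq\<close> by (simp add: rhat_eq_gibbs_weights w_def ys_def field_simps)
  have "0 < C / real nq" using w_pos[of 0] w_le[OF \<open>0 < nq\<close>] by linarith
  then have "0 \<le> C" using \<open>0 < nq\<close> by (simp add: zero_less_divide_iff)
  have quad: "(\<Sum>k<nq. w k * (ys k \<bullet> y)^2) \<le> C * D * (norm y)^2" for y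
    using w_le \<open>0 \<le> C\<close> smom_le
    by (intro weighted_quadratic_form_le) (auto simp: smom_eq_weighted_moment ys_def)
  have "specnorm (weighted_cov w ys nq) \<le> 2 * (C * D)"
    using w_pos \<open>0 \<le> C\<close> specnorm_nonneg[of "smom f xq nq"] smom_le quad
    by (intro specnorm_weighted_cov_le)
       (auto simp: w_def sum_gibbs_weights[OF \<open>0 < nq\<close>] less_imp_le)
  then show ?thesis by (simp add: hessian_ell[OF \<open>0 < nq\<close>] w_def ys_def mult.assoc)
qed

theorem proposition5:
  fixes M :: "'w measure"
    and psi :: "real \<Rightarrow> real \<Rightarrow> real^'b::finite"
    and p q :: "(real, 'm::{finite,linorder}) vec \<Rightarrow> real"
    and idx :: "'d::finite \<Rightarrow> ('m \<times> 'm) \<times> 'b"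
    and xp xq :: "nat \<Rightarrow> 'w \<Rightarrow> (real, 'm) vec"
    and np nq :: nat
    and thetas :: "real^'d"
    and Cmin Cmax Cratio Dmax1 Dmax2 Dmin2 delta_nq :: real
    and Cf :: "'m \<times> 'm \<Rightarrow> real"
  defines "f \<equiv> feat psi idx"
    and "Q \<equiv> density lborel (\<lambda>x. ennreal (q x))"
    and "S \<equiv> {t \<in> Eset. \<exists>d. fst (idx d) = t \<and> thetas $ d \<noteq> 0}"
    and "J \<equiv> {d. fst (idx d) \<in> {t \<in> Eset. \<exists>d'. fst (idx d') = t \<and> thetas $ d' \<noteq> 0}}"
  assumes "prob_space M"
    and "bij_betw idx UNIV (Eset \<times> UNIV)"
    and "0 < np" and "0 < nq"
    and "\<forall>x. 0 \<le> p x" and "\<forall>x. 0 \<le> q x"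
    and "\<forall>i<np. distributed M lborel (xp i) (\<lambda>x. ennreal (p x))"
    and "\<forall>i<nq. distributed M lborel (xq i) (\<lambda>x. ennreal (q x))"
    and "prob_space.indep_vars M (\<lambda>_. borel) (case_sum xp xq) (Inl ` {..<np} \<union> Inr ` {..<nq})"
    and "\<forall>x. p x = q x * rpop Q f thetas x"
    (* (A7) *)
    and "0 < Cmin"
    and "\<forall>\<delta> x. norm \<delta> \<le> norm thetas \<longrightarrow>
           Cmin \<le> rpop Q f (thetas + \<delta>) x \<and> rpop Q f (thetas + \<delta>) x \<le> Cmax"
    and "\<forall>\<omega>\<in>space M. \<forall>\<delta> x. norm \<delta> \<le> norm thetas \<longrightarrow>
           1 / Cratio \<le> rhat f (\<lambda>i. xq i \<omega>) nq (thetas + \<delta>) x \<and>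
           rhat f (\<lambda>i. xq i \<omega>) nq (thetas + \<delta>) x \<le> Cratio"
    and "\<forall>t\<in>Eset. \<forall>x. norm (fblock psi t x) \<le> Cf t"
    (* (A8) *)
    and "AE \<omega> in M.
           (\<forall>t\<in>Eset. (\<Sum>i<nq. norm (fblock psi t (xq i \<omega>))) / real nq \<le> Dmax1) \<and>
           specnorm (smom f (\<lambda>i. xq i \<omega>) nq) \<le> Dmax2 \<and>
           specnorm (scov f (\<lambda>i. xq i \<omega>) nq) \<le> Dmax2"
    and "0 < Dmin2"
    and "\<exists>A\<in>sets M. 1 - delta_nq \<le> measure M A \<and>
           (\<forall>\<omega>\<in>A. Dmin2 \<le> lambda_min_sub (scov f (\<lambda>i. xq i \<omega>) nq) J)"
  shows "\<forall>\<delta>::real^'d. norm \<delta> \<le> norm thetas \<longrightarrow>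
           (\<exists>A\<in>sets M. 1 - delta_nq \<le> measure M A \<and>
             (\<forall>\<omega>\<in>A. specnorm (hessian (ell f (\<lambda>i. xp i \<omega>) np (\<lambda>i. xq i \<omega>) nq) (thetas + \<delta>))
                      \<le> 2 * Cratio * Dmax2))"
proof (intro allI impI)
  fix \<delta> :: "real^'d"
  assume "norm \<delta> \<le> norm thetas"
  \<comment> \<open>The Hessian bound holds almost surely; the event of (A8) only supplies the probability.\<close>
  obtain A0 where A0: "A0 \<in> sets M" "1 - delta_nq \<le> measure M A0"
    using assms(21) by blast
  obtain N where "N \<in> null_sets M"
    and smom_le: "\<And>\<omega>. \<omega> \<in> space M - N \<Longrightarrow> specnorm (smom f (\<lambda>i. xq i \<omega>) nq) \<le> Dmax2"
    by (rule AE_E3[OF assms(19)]) blast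
  show "\<exists>A\<in>sets M. 1 - delta_nq \<le> measure M A \<and>
          (\<forall>\<omega>\<in>A. specnorm (hessian (ell f (\<lambda>i. xp i \<omega>) np (\<lambda>i. xq i \<omega>) nq) (thetas + \<delta>))
                   \<le> 2 * Cratio * Dmax2)"
  proof (intro bexI[of _ "A0 - N"] conjI ballI)
    show "A0 - N \<in> sets M" using A0 \<open>N \<in> null_sets M\<close> by auto
    show "1 - delta_nq \<le> measure M (A0 - N)"
      using A0 \<open>N \<in> null_sets M\<close> by (simp add: measure_Diff_null_set)
    fix \<omega> assume "\<omega> \<in> A0 - N"
    then have "\<omega> \<in> space M - N" using A0 sets.sets_into_space by blast
    then have "rhat f (\<lambda>i. xq i \<omega>) nq (thetas + \<delta>) (xq k \<omega>) \<le> Cratio" if "k < nq" for k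
      using assms(17) \<open>norm \<delta> \<le> norm thetas\<close> by blast
    with \<open>\<omega> \<in> space M - N\<close>
    show "specnorm (hessian (ell f (\<lambda>i. xp i \<omega>) np (\<lambda>i. xq i \<omega>) nq) (thetas + \<delta>))
            \<le> 2 * Cratio * Dmax2"
      by (intro specnorm_hessian_ell_le assms(8) smom_le)
  qed
qed

end
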